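(* Let $n,t,m$ be positive integers, $m\ge 0$ allowed, let $\sigma\in\mathcal{S}_n$, and let $\sigma_e$ be obtained from $\sigma$ by a burst of stuck-at errors of length at most $t$ with threshold $m$ (as defined in the context). For $i\ge1$ let $B_{i,1}=\{2(i-1)t+1,\ldots,2it\}\cap[n]$ and $B_{i,2}=\{t+2(i-1)t+1,\ldots,t+2it\}\cap[n]$. Let $E_1$ be the set of $i\in[\lceil n/(2t)\rceil]$ such that at least one value in $B_{i,1}$ does not appear in $\sigma_e$, and $E_2$ the set of $i\in[\lceil (n-t)/(2t)\rceil]$ such that at least one value in $B_{i,2}$ does not appear in $\sigma_e$. Then $|E_1|\le1$ or $|E_2|\le 1$.
   Context: $[n]=\{1,\ldots,n\}$; $\mathcal{S}_n$ is the set of permutations of $[n]$ written as sequences. Burst of stuck-at errors of length at most $t$ with threshold $m$: $\sigma_e\in[n]^n$ is obtained from $\sigma$ if there exist $j\in[n]$, $t_1\in[t]$ and positions $i_1,\ldots,i_{t_1}$ with $\sigma(i_\ell)=j+\ell-1$ and $\sigma(i_\ell)>m$ for all $\ell\in[t_1]$, such that $\sigma_e(i_\ell)=j$ for all $\ell\in[t_1]$ and $\sigma_e(i)=\sigma(i)$ for all other $i$. *)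

theory Defs
  imports Complex_Main
begin

definition is_perm :: "nat \<Rightarrow> (nat \<Rightarrow> nat) \<Rightarrow> bool" where
  "is_perm n \<sigma> \<longleftrightarrow> bij_betw \<sigma> {1..n} {1..n}"

definition burst_stuck :: "nat \<Rightarrow> nat \<Rightarrow> nat \<Rightarrow> (nat \<Rightarrow> nat) \<Rightarrow> (nat \<Rightarrow> nat) \<Rightarrow> bool" where
  "burst_stuck n t m \<sigma> \<sigma>e \<longleftrightarrow>
     (\<forall>i\<in>{1..n}. \<sigma>e i \<in> {1..n}) \<and>
     (\<exists>j\<in>{1..n}. \<exists>t1\<in>{1..t}. \<exists>pos :: nat \<Rightarrow> nat.
        (\<forall>l\<in>{1..t1}. pos l \<in> {1..n} \<and> \<sigma> (pos l) = j + l - 1 \<and> \<sigma> (pos l) > m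
                        \<and> \<sigma>e (pos l) = j) \<and>
        (\<forall>i\<in>{1..n}. i \<notin> pos ` {1..t1} \<longrightarrow> \<sigma>e i = \<sigma> i))"

definition blockB1 :: "nat \<Rightarrow> nat \<Rightarrow> nat \<Rightarrow> nat set" where
  "blockB1 n t i = {2*(i-1)*t+1 .. 2*i*t} \<inter> {1..n}"

definition blockB2 :: "nat \<Rightarrow> nat \<Rightarrow> nat \<Rightarrow> nat set" where
  "blockB2 n t i = {t + 2*(i-1)*t+1 .. t + 2*i*t} \<inter> {1..n}"

definition E1 :: "nat \<Rightarrow> nat \<Rightarrow> (nat \<Rightarrow> nat) \<Rightarrow> nat set" where
  "E1 n t \<sigma>e = {i \<in> {1 .. nat \<lceil>real n / (2 * real t)\<rceil>}.
                    \<exists>v \<in> blockB1 n t i. v \<notin> \<sigma>e ` {1..n}}"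

definition E2 :: "nat \<Rightarrow> nat \<Rightarrow> (nat \<Rightarrow> nat) \<Rightarrow> nat set" where
  "E2 n t \<sigma>e = {i \<in> {1 .. nat \<lceil>(real n - real t) / (2 * real t)\<rceil>}.
                    \<exists>v \<in> blockB2 n t i. v \<notin> \<sigma>e ` {1..n}}"

end

theory Submission
  imports Defs
begin

text \<open>Every value missing from \<open>\<sigma>\<^sub>e\<close> is one of the overwritten values
  \<open>j + 1, \<dots>, j + t\<^sub>1 - 1\<close>, so the missing values lie in an interval of fewer than
  \<open>t\<close> consecutive integers. The blocks \<open>B\<^sub>i\<^sub>,\<^sub>1\<close> partition the integers into
  intervals of length \<open>2t\<close>, and the blocks \<open>B\<^sub>i\<^sub>,\<^sub>2\<close> form the same partition shifted
  by \<open>t\<close>. An interval of at most \<open>t\<close> integers that crosses a boundary of the first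
  partition stays within distance \<open>t\<close> of that boundary, which is the midpoint of a block of the
  second. So all missing values fall into a single block of one of the two partitions.\<close>

lemma div_eq_or_shifted_div_eq:
  fixes a b t :: nat
  assumes "a \<le> b" "b < a + t"
  shows "a div (2*t) = b div (2*t) \<or> (a + t) div (2*t) = (b + t) div (2*t)"
proof (cases "a div (2*t) = b div (2*t)")
  case False
  define q where "q = b div (2*t)"
  have "a div (2*t) \<le> q"
    unfolding q_def using assms(1) by (rule div_le_mono)
  with False have "a div (2*t) < q"
    unfolding q_def by simp
  moreover have "t > 0"
    using False by (cases t) auto
  ultimately have boundary_above_a: "a < 2*t*q"
    using div_le_mono[of "2*t*q" a "2*t"] by fastforce
  have boundary_below_b: "2*t*q \<le> b"
    unfolding q_def by (metis div_times_less_eq_dividend mult.commute)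
  have "(a + t) div (2*t) = q" "(b + t) div (2*t) = q"
    using assms boundary_above_a boundary_below_b by (auto intro!: div_nat_eqI)
  then show ?thesis by simp
qed simp

lemma div_const_or_shifted_div_const_on_interval:
  fixes a t :: nat
  shows "(\<exists>q. \<forall>x\<in>{a..<a+t}. x div (2*t) = q) \<or>
         (\<exists>q. \<forall>x\<in>{a..<a+t}. (x + t) div (2*t) = q)"
proof -
  have const_if_ends_agree: "\<forall>x\<in>{a..<a+t}. f x = f a"
    if "mono f" "f a = f (a + t - 1)" for f :: "nat \<Rightarrow> nat"
  proof
    fix x assume "x \<in> {a..<a+t}"
    then have "f a \<le> f x" "f x \<le> f (a + t - 1)"
      using monoD[OF \<open>mono f\<close>] by auto
    then show "f x = f a" using that(2) by simp
  qed
  have "mono (\<lambda>x. x div (2*t))" "mono (\<lambda>x. (x + t) div (2*t))"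
    by (auto intro!: monoI div_le_mono)
  moreover have "a div (2*t) = (a + t - 1) div (2*t) \<or>
      (a + t) div (2*t) = (a + t - 1 + t) div (2*t)" if "t > 0"
    using that by (intro div_eq_or_shifted_div_eq) auto
  ultimately show ?thesis
    by (cases "t = 0") (auto dest!: const_if_ends_agree)
qed

lemma blockB1_index:
  assumes "v \<in> blockB1 n t i" "t > 0"
  shows "Suc ((v - 1) div (2*t)) = i"
proof -
  obtain k where i: "i = Suc k"
    using assms(1) unfolding blockB1_def by (cases i) auto
  have "2*k*t < v" "v \<le> 2*k*t + 2*t"
    using assms(1) unfolding blockB1_def i by auto
  then have "(v - 1) div (2*t) = k"
    by (intro div_nat_eqI) (auto simp: algebra_simps)
  then show ?thesis
    using i by simp
qed

lemma blockB2_index: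
  assumes "v \<in> blockB2 n t i" "t > 0"
  shows "(v - 1 + t) div (2*t) = i"
proof -
  obtain k where i: "i = Suc k"
    using assms(1) unfolding blockB2_def by (cases i) auto
  have "2*k*t + t < v" "v \<le> 2*k*t + 3*t"
    using assms(1) unfolding blockB2_def i by auto
  then show ?thesis
    unfolding i by (intro div_nat_eqI) (auto simp: algebra_simps)
qed

lemma missing_values_of_burst:
  assumes "is_perm n \<sigma>" "burst_stuck n t m \<sigma> \<sigma>e"
  obtains j where "{1..n} - \<sigma>e ` {1..n} \<subseteq> {j<..<j+t}"
proof -
  obtain j t1 pos where t1: "t1 \<le> t"
    and stuck: "\<And>l. l \<in> {1..t1} \<Longrightarrow>
      pos l \<in> {1..n} \<and> \<sigma> (pos l) = j + l - 1 \<and> \<sigma>e (pos l) = j"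
    and unchanged: "\<And>p. p \<in> {1..n} \<Longrightarrow> p \<notin> pos ` {1..t1} \<Longrightarrow> \<sigma>e p = \<sigma> p"
    using assms(2) unfolding burst_stuck_def by (metis atLeastAtMost_iff)
  have "v \<in> {j<..<j+t}" if v: "v \<in> {1..n}" "v \<notin> \<sigma>e ` {1..n}" for v
  proof -
    obtain p where p: "p \<in> {1..n}" "\<sigma> p = v"
      using assms(1) v(1) unfolding is_perm_def by (metis bij_betw_imp_surj_on imageE)
    have "p \<in> pos ` {1..t1}"
      using unchanged[OF p(1)] p v(2) by force
    then obtain l where l: "l \<in> {1..t1}" "p = pos l"
      by blast
    with stuck p have "v = j + l - 1" "j \<in> \<sigma>e ` {1..n}"
      by force+
    with v(2) l t1 show ?thesis
      by (cases "l = 1") auto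
  qed
  then show ?thesis
    using that by blast
qed

lemma E1_subset_block_indices_of_missing:
  assumes "t > 0"
  shows "E1 n t \<sigma>e \<subseteq> (\<lambda>v. Suc ((v - 1) div (2*t))) ` ({1..n} - \<sigma>e ` {1..n})"
proof
  fix i assume "i \<in> E1 n t \<sigma>e"
  then obtain v where "v \<in> blockB1 n t i" "v \<in> {1..n} - \<sigma>e ` {1..n}"
    unfolding E1_def blockB1_def by auto
  then show "i \<in> (\<lambda>v. Suc ((v - 1) div (2*t))) ` ({1..n} - \<sigma>e ` {1..n})"
    using blockB1_index[OF _ assms] by force
qed

lemma E2_subset_block_indices_of_missing:
  assumes "t > 0"
  shows "E2 n t \<sigma>e \<subseteq> (\<lambda>v. (v - 1 + t) div (2*t)) ` ({1..n} - \<sigma>e ` {1..n})"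
proof
  fix i assume "i \<in> E2 n t \<sigma>e"
  then obtain v where "v \<in> blockB2 n t i" "v \<in> {1..n} - \<sigma>e ` {1..n}"
    unfolding E2_def blockB2_def by auto
  then show "i \<in> (\<lambda>v. (v - 1 + t) div (2*t)) ` ({1..n} - \<sigma>e ` {1..n})"
    using blockB2_index[OF _ assms] by force
qed

theorem lemma3:
  fixes n t m :: nat and \<sigma> \<sigma>e :: "nat \<Rightarrow> nat"
  assumes "n \<ge> 1" and "t \<ge> 1"
    and "is_perm n \<sigma>"
    and "burst_stuck n t m \<sigma> \<sigma>e"
  shows "card (E1 n t \<sigma>e) \<le> 1 \<or> card (E2 n t \<sigma>e) \<le> 1"
proof -
  have "t > 0"
    using assms(2) by simp
  obtain j where window: "{1..n} - \<sigma>e ` {1..n} \<subseteq> {j<..<j+t}"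
    using missing_values_of_burst assms(3,4) .
  have window_pred: "v - 1 \<in> {j..<j+t}" if "v \<in> {1..n} - \<sigma>e ` {1..n}" for v
    using subsetD[OF window that] by auto
  from div_const_or_shifted_div_const_on_interval[of j t]
  consider (aligned) q where "\<forall>x\<in>{j..<j+t}. x div (2*t) = q"
    | (shifted) q where "\<forall>x\<in>{j..<j+t}. (x + t) div (2*t) = q"
    by blast
  then show ?thesis
  proof cases
    case aligned
    then have "(\<lambda>v. Suc ((v - 1) div (2*t))) ` ({1..n} - \<sigma>e ` {1..n}) \<subseteq> {Suc q}"
      using window_pred by blast
    with E1_subset_block_indices_of_missing[OF \<open>t > 0\<close>, of n \<sigma>e]
    have "E1 n t \<sigma>e \<subseteq> {Suc q}"
      by blast
    then show ?thesis
      using card_mono[of "{Suc q}"] by simp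
  next
    case shifted
    then have "(\<lambda>v. (v - 1 + t) div (2*t)) ` ({1..n} - \<sigma>e ` {1..n}) \<subseteq> {q}"
      using window_pred by blast
    with E2_subset_block_indices_of_missing[OF \<open>t > 0\<close>, of n \<sigma>e]
    have "E2 n t \<sigma>e \<subseteq> {q}"
      by blast
    then show ?thesis
      using card_mono[of "{q}"] by simp
  qed
qed

end
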